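(* Let $\Sigma$ be a $(\mathbf d,\mathbf z)$-cluster pattern with principal coefficients and initial seed $(\mathbf x,\mathbf y,B)$. Equip $\mathbb Z[x_1^{\pm1},\dots,x_n^{\pm1},\mathbf y,\mathbf z]$ with the $\mathbb Z^n$-grading $\deg x_i=\mathbf e_i$, $\deg y_j=-\mathbf b_j:=-\sum_{i=1}^nb_{ij}\mathbf e_i$ (minus the $j$-th column of $B$), $\deg z_{i,s}=0$, where $\mathbf e_i$ are the unit vectors. Then every $X$-function $X^t_i(\mathbf x,\mathbf y,\mathbf z)$ of $\Sigma$ is homogeneous with respect to this grading.
   Context: All matrices are integer and $[a]_+=\max(a,0)$. A semifield $\mathbb{P}$ is an abelian multiplicative group with a commutative, associative operation $\oplus$ over which multiplication distributes; $\mathbb{Z}\mathbb{P}$ its group ring, $\mathbb{Q}\mathbb{P}$ the fraction field of $\mathbb Z\mathbb P$, $\mathcal{F}=\mathbb{Q}\mathbb{P}(w_1,\dots,w_n)$. A seed in $\mathbb{P}$ is $(\mathbf{x},\mathbf{y},B)$ with $B=(b_{ij})$ skew-symmetrizable $n\times n$, $\mathbf{x}\in\mathcal{F}^n$, $\mathbf{y}\in\mathbb{P}^n$. Mutation data: positive integers $\mathbf d$ and $z_{i,s}$ ($1\le s\le d_i-1$) with $z_{i,s}=z_{i,d_i-s}$, $z_{i,0}=z_{i,d_i}=1$. The $(\mathbf d,\mathbf z)$-mutation $\mu_k(\mathbf{x},\mathbf{y},B)=(\mathbf{x}',\mathbf{y}',B')$: $b'_{ij}=-b_{ij}$ if $i=k$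 or $j=k$, else $b'_{ij}=b_{ij}+d_k([-b_{ik}]_+b_{kj}+b_{ik}[b_{kj}]_+)$; $y'_k=y_k^{-1}$, $y'_i=y_i(y_k^{[\varepsilon b_{ki}]_+})^{d_k}(\bigoplus_{s=0}^{d_k}z_{k,s}y_k^{\varepsilon s})^{-b_{ki}}$ ($i\ne k$); $x'_i=x_i$ ($i\ne k$), $x'_k=x_k^{-1}(\prod_jx_j^{[-\varepsilon b_{jk}]_+})^{d_k}\frac{\sum_{s=0}^{d_k}z_{k,s}\hat y_k^{\varepsilon s}}{\bigoplus_{s=0}^{d_k}z_{k,s}y_k^{\varepsilon s}}$, $\hat y_i=y_i\prod_jx_j^{b_{ji}}$, $\varepsilon=\pm1$. $\mathbb T_n$ is the $n$-regular tree with edges labeled $1,\dots,n$, distinct labels at each vertex. A $(\mathbf d,\mathbf z)$-cluster pattern in $\mathbb P$ assigns seeds $(\mathbf x_t,\mathbf y_t,B_t)$, $\mathbf x_t=(x^t_i)$, to vertices, related by $\mu_k$ along edges labeled $k$, with initial seed at a fixed vertex $t_0$. Principal coefficients: with $y_1,\dots,y_n$, $z_{i,s}$ ($z_{i,s}=z_{i,d_i-s}$) formal variables, $\mathrm{Trop}(\mathbf y,\mathbf z)$ is the free abelian group they generate with $\oplus$ the componentwise minimum of exponents; the pattern with principal coefficients is the one in $\mathrm{Trop}(\mathbf y,\mathbf z)$ with initial seed $(\mathbf x,\mathbf y,B)$. Each $x^t_i$ equals a Laurent polynomial $X^t_i(\mathbf x,\mathbf y,\mathbf z)$ (the $X$-function),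 which lies in $\mathbb Z[x_1^{\pm1},\dots,x_n^{\pm1},\mathbf y,\mathbf z]$. *)

theory Defs
  imports Complex_Main
begin

text \<open>Indices run over 0..n-1 (instead of 1..n). Elements of the tropical semifield
Trop(y,z) are Laurent monomials, represented by their exponent vectors: a function on
the y-indices and a function on the (canonical) z-indices. The variable z_{i,s}
(1 <= s <= d_i - 1) is identified with z_{i,d_i-s}; its canonical index is
(i, min s (d_i - s)).\<close>

type_synonym trop = "(nat \<Rightarrow> int) \<times> (nat \<times> nat \<Rightarrow> int)"

definition tone :: trop where "tone = ((\<lambda>_. 0), (\<lambda>_. 0))"

definition tmul :: "trop \<Rightarrow> trop \<Rightarrow> trop" where
  "tmul a b = ((\<lambda>j. fst a j + fst b j), (\<lambda>q. snd a q + snd b q))"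

definition tpow :: "trop \<Rightarrow> int \<Rightarrow> trop" where
  "tpow a m = ((\<lambda>j. m * fst a j), (\<lambda>q. m * snd a q))"

definition tinv :: "trop \<Rightarrow> trop" where "tinv a = tpow a (-1)"

text \<open>Tropical sum over a finite nonempty index set: componentwise minimum of exponents.\<close>
definition tsum :: "nat set \<Rightarrow> (nat \<Rightarrow> trop) \<Rightarrow> trop" where
  "tsum S f = ((\<lambda>j. Min ((\<lambda>s. fst (f s) j) ` S)), (\<lambda>q. Min ((\<lambda>s. snd (f s) q) ` S)))"

definition zidx :: "(nat \<Rightarrow> nat) \<Rightarrow> nat \<Rightarrow> nat \<Rightarrow> nat \<times> nat" where
  "zidx d i s = (i, min s (d i - s))"

definition zset :: "nat \<Rightarrow> (nat \<Rightarrow> nat) \<Rightarrow> (nat \<times> nat) set" where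
  "zset n d = {(i, s). i < n \<and> 1 \<le> s \<and> 2 * s \<le> d i}"

definition tz :: "(nat \<Rightarrow> nat) \<Rightarrow> nat \<Rightarrow> nat \<Rightarrow> trop" where
  "tz d k s = (if s = 0 \<or> d k \<le> s then tone else ((\<lambda>_. 0), (\<lambda>_. 0)(zidx d k s := 1)))"

definition ty :: "nat \<Rightarrow> trop" where "ty j = ((\<lambda>_. 0)(j := 1), (\<lambda>_. 0))"

text \<open>Elements of the ambient field F = QP(x_1..x_n) are represented by the real functions
they induce on points with all x_i, y_j, z_{i,s} positive reals
(a point is a triple of values for x, y and canonical z).\<close>

type_synonym pt = "(nat \<Rightarrow> real) \<times> (nat \<Rightarrow> real) \<times> (nat \<times> nat \<Rightarrow> real)"

definition positive_pt :: "nat \<Rightarrow> (nat \<Rightarrow> nat) \<Rightarrow> pt \<Rightarrow> bool" where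
  "positive_pt n d v \<longleftrightarrow> (\<forall>j<n. fst v j > 0) \<and> (\<forall>j<n. fst (snd v) j > 0)
      \<and> (\<forall>q\<in>zset n d. snd (snd v) q > 0)"

definition teval :: "nat \<Rightarrow> (nat \<Rightarrow> nat) \<Rightarrow> pt \<Rightarrow> trop \<Rightarrow> real" where
  "teval n d v a = (\<Prod>j<n. power_int (fst (snd v) j) (fst a j))
                 * (\<Prod>q\<in>zset n d. power_int (snd (snd v) q) (snd a q))"

definition zval :: "(nat \<Rightarrow> nat) \<Rightarrow> pt \<Rightarrow> nat \<Rightarrow> nat \<Rightarrow> real" where
  "zval d v k s = (if s = 0 \<or> d k \<le> s then 1 else snd (snd v) (zidx d k s))"

definition pos :: "int \<Rightarrow> int" where "pos a = max a 0"

text \<open>(d,z)-mutation in direction k, with the choice epsilon = 1.\<close>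

definition mutB :: "(nat \<Rightarrow> nat) \<Rightarrow> nat \<Rightarrow> (nat \<Rightarrow> nat \<Rightarrow> int) \<Rightarrow> (nat \<Rightarrow> nat \<Rightarrow> int)" where
  "mutB d k B = (\<lambda>i j. if i = k \<or> j = k then - B i j
      else B i j + int (d k) * (pos (- B i k) * B k j + B i k * pos (B k j)))"

definition tden :: "(nat \<Rightarrow> nat) \<Rightarrow> nat \<Rightarrow> (nat \<Rightarrow> trop) \<Rightarrow> trop" where
  "tden d k Y = tsum {0..d k} (\<lambda>s. tmul (tz d k s) (tpow (Y k) (int s)))"

definition mutY :: "(nat \<Rightarrow> nat) \<Rightarrow> nat \<Rightarrow> (nat \<Rightarrow> nat \<Rightarrow> int) \<Rightarrow> (nat \<Rightarrow> trop) \<Rightarrow> (nat \<Rightarrow> trop)" where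
  "mutY d k B Y = (\<lambda>i. if i = k then tinv (Y k)
      else tmul (tmul (Y i) (tpow (Y k) (int (d k) * pos (B k i))))
                (tpow (tden d k Y) (- B k i)))"

definition mutX :: "nat \<Rightarrow> (nat \<Rightarrow> nat) \<Rightarrow> nat \<Rightarrow> (nat \<Rightarrow> nat \<Rightarrow> int) \<Rightarrow> (nat \<Rightarrow> trop)
    \<Rightarrow> (nat \<Rightarrow> pt \<Rightarrow> real) \<Rightarrow> (nat \<Rightarrow> pt \<Rightarrow> real)" where
  "mutX n d k B Y X = (\<lambda>i v. if i \<noteq> k then X i v else
      (let yhat = teval n d v (Y k) * (\<Prod>j<n. power_int (X j v) (B j k)) in
       inverse (X k v) * (\<Prod>j<n. power_int (X j v) (pos (- B j k))) ^ d k
       * (\<Sum>s = 0..d k. zval d v k s * yhat ^ s) / teval n d v (tden d k Y)))"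

type_synonym seed = "(nat \<Rightarrow> nat \<Rightarrow> int) \<times> (nat \<Rightarrow> trop) \<times> (nat \<Rightarrow> pt \<Rightarrow> real)"

definition mut :: "nat \<Rightarrow> (nat \<Rightarrow> nat) \<Rightarrow> seed \<Rightarrow> nat \<Rightarrow> seed" where
  "mut n d S k = (case S of (B, Y, X) \<Rightarrow> (mutB d k B, mutY d k B Y, mutX n d k B Y X))"

text \<open>Vertices of the n-regular tree T_n are reduced words ks (entries < n, no two
consecutive entries equal): the path from t0.\<close>

definition tree_vertex :: "nat \<Rightarrow> nat list \<Rightarrow> bool" where
  "tree_vertex n ks \<longleftrightarrow> set ks \<subseteq> {..<n} \<and> (\<forall>i. Suc i < length ks \<longrightarrow> ks ! i \<noteq> ks ! Suc i)"

definition seed_at :: "nat \<Rightarrow> (nat \<Rightarrow> nat) \<Rightarrow> (nat \<Rightarrow> nat \<Rightarrow> int) \<Rightarrow> nat list \<Rightarrow> seed" where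
  "seed_at n d B0 ks = foldl (mut n d) (B0, ty, (\<lambda>i v. fst v i)) ks"

definition cluster_var :: "nat \<Rightarrow> (nat \<Rightarrow> nat) \<Rightarrow> (nat \<Rightarrow> nat \<Rightarrow> int) \<Rightarrow> nat list \<Rightarrow> nat \<Rightarrow> pt \<Rightarrow> real" where
  "cluster_var n d B0 ks i = snd (snd (seed_at n d B0 ks)) i"

definition skew_symmetrizable :: "nat \<Rightarrow> (nat \<Rightarrow> nat \<Rightarrow> int) \<Rightarrow> bool" where
  "skew_symmetrizable n B \<longleftrightarrow> (\<exists>D :: nat \<Rightarrow> int. (\<forall>i<n. D i > 0)
      \<and> (\<forall>i<n. \<forall>j<n. D i * B i j = - (D j * B j i)))"

text \<open>A monomial: integer exponents of x_j, natural exponents of y_j and of the canonical z's.\<close>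
type_synonym mon = "(nat \<Rightarrow> int) \<times> (nat \<Rightarrow> nat) \<times> (nat \<times> nat \<Rightarrow> nat)"

definition admissible_mon :: "nat \<Rightarrow> (nat \<Rightarrow> nat) \<Rightarrow> mon \<Rightarrow> bool" where
  "admissible_mon n d m \<longleftrightarrow> (\<forall>j. n \<le> j \<longrightarrow> fst m j = 0 \<and> fst (snd m) j = 0)
      \<and> (\<forall>q. q \<notin> zset n d \<longrightarrow> snd (snd m) q = 0)"

definition laurent_poly :: "nat \<Rightarrow> (nat \<Rightarrow> nat) \<Rightarrow> (mon \<Rightarrow> int) \<Rightarrow> bool" where
  "laurent_poly n d P \<longleftrightarrow> finite {m. P m \<noteq> 0} \<and> (\<forall>m. P m \<noteq> 0 \<longrightarrow> admissible_mon n d m)"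

definition mon_eval :: "nat \<Rightarrow> (nat \<Rightarrow> nat) \<Rightarrow> mon \<Rightarrow> pt \<Rightarrow> real" where
  "mon_eval n d m v = (\<Prod>j<n. power_int (fst v j) (fst m j))
      * (\<Prod>j<n. fst (snd v) j ^ fst (snd m) j)
      * (\<Prod>q\<in>zset n d. snd (snd v) q ^ snd (snd m) q)"

definition lp_eval :: "nat \<Rightarrow> (nat \<Rightarrow> nat) \<Rightarrow> (mon \<Rightarrow> int) \<Rightarrow> pt \<Rightarrow> real" where
  "lp_eval n d P v = (\<Sum>m\<in>{m. P m \<noteq> 0}. of_int (P m) * mon_eval n d m v)"

definition mon_deg :: "nat \<Rightarrow> (nat \<Rightarrow> nat \<Rightarrow> int) \<Rightarrow> mon \<Rightarrow> nat \<Rightarrow> int" where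
  "mon_deg n B m i = fst m i - (\<Sum>j<n. B i j * int (fst (snd m) j))"

definition homogeneous :: "nat \<Rightarrow> (nat \<Rightarrow> nat \<Rightarrow> int) \<Rightarrow> (mon \<Rightarrow> int) \<Rightarrow> bool" where
  "homogeneous n B P \<longleftrightarrow> (\<exists>g :: nat \<Rightarrow> int. \<forall>m. P m \<noteq> 0 \<longrightarrow> (\<forall>i<n. mon_deg n B m i = g i))"

end

theory Submission
  imports Defs "HOL-Computational_Algebra.Polynomial"
begin

(*
  The grading deg x_i = e_i, deg y_j = -b_j, deg z = 0 is the weight decomposition for an
  action of the torus (R_{>0})^n on the positive points (x, y, z): l acts by x_i |-> l_i x_i,
  y_j |-> l^(-b_j) y_j, z |-> z.  A function f is "homogeneous of degree g" if
  f (l . v) = l^g f v.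

  1. Homogeneous functions are closed under products, quotients, integer powers and sums of
     equal degree; every Laurent monomial is homogeneous of its grading degree.
  2. Along every mutation sequence each cluster variable x_j is homogeneous of some degree
     G_j (its g-vector), and every yhat_k = y_k * prod_j x_j^(b_jk) has degree 0.  Mutation
     preserves this: the exchange polynomial is a polynomial in the invariant yhat_k, and the
     new degrees of the yhat_k vanish by an integer identity which needs only b_kk = 0, a
     consequence of skew-symmetrizability (which is itself preserved by matrix mutation).
  3. Laurent monomials are linearly independent as functions on positive points (linear
     independence of exponentials), so a Laurent polynomial whose evaluation is homogeneous
     of degree G has all its monomials of degree G.
*)

section \<open>The torus action and homogeneous functions\<close>

definition torus_pos :: "nat \<Rightarrow> (nat \<Rightarrow> real) \<Rightarrow> bool" where
  "torus_pos n l \<longleftrightarrow> (\<forall>i<n. l i > 0)"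

definition torus_char :: "nat \<Rightarrow> (nat \<Rightarrow> real) \<Rightarrow> (nat \<Rightarrow> int) \<Rightarrow> real" where
  "torus_char n l g = exp (\<Sum>i<n. of_int (g i) * ln (l i))"

definition torus_act :: "nat \<Rightarrow> (nat \<Rightarrow> nat \<Rightarrow> int) \<Rightarrow> (nat \<Rightarrow> real) \<Rightarrow> pt \<Rightarrow> pt" where
  "torus_act n B l v =
     ((\<lambda>j. l j * fst v j), (\<lambda>j. fst (snd v) j * torus_char n l (\<lambda>i. - B i j)), snd (snd v))"

definition hom_deg :: "nat \<Rightarrow> (nat \<Rightarrow> nat) \<Rightarrow> (nat \<Rightarrow> nat \<Rightarrow> int) \<Rightarrow> (pt \<Rightarrow> real) \<Rightarrow> (nat \<Rightarrow> int) \<Rightarrow> bool" where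
  "hom_deg n d B f g \<longleftrightarrow> (\<forall>l v. torus_pos n l \<longrightarrow> positive_pt n d v \<longrightarrow>
      f (torus_act n B l v) = torus_char n l g * f v)"

lemma torus_char_add: "torus_char n l (\<lambda>i. g i + h i) = torus_char n l g * torus_char n l h"
  by (simp add: torus_char_def sum.distrib distrib_right exp_add)

lemma torus_char_zero: "torus_char n l (\<lambda>_. 0) = 1"
  by (simp add: torus_char_def)

lemma torus_char_uminus: "torus_char n l (\<lambda>i. - g i) = inverse (torus_char n l g)"
  by (simp add: torus_char_def sum_negf exp_minus)

lemma torus_char_scale: "torus_char n l (\<lambda>i. m * g i) = power_int (torus_char n l g) m"
  by (simp add: torus_char_def exp_power_int sum_distrib_left mult.assoc)

lemma torus_char_cong: "(\<And>i. i < n \<Longrightarrow> g i = h i) \<Longrightarrow> torus_char n l g = torus_char n l h"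
  unfolding torus_char_def by (intro arg_cong[where f=exp] sum.cong) auto

lemma torus_char_unit:
  assumes "torus_pos n l" "j < n"
  shows "torus_char n l (\<lambda>i. if i = j then 1 else 0) = l j"
proof -
  have "(\<Sum>i<n. of_int (if i = j then 1 else 0) * ln (l i)) = (\<Sum>i<n. if i = j then ln (l i) else 0)"
    by (rule sum.cong) auto
  also have "\<dots> = ln (l j)" using assms(2) by simp
  finally show ?thesis using assms by (simp add: torus_char_def torus_pos_def)
qed

lemma positive_torus_act: "torus_pos n l \<Longrightarrow> positive_pt n d v \<Longrightarrow> positive_pt n d (torus_act n B l v)"
  by (simp add: positive_pt_def torus_act_def torus_pos_def torus_char_def)

lemma hom_deg_mult:
  "hom_deg n d B f g \<Longrightarrow> hom_deg n d B h g' \<Longrightarrow> hom_deg n d B (\<lambda>v. f v * h v) (\<lambda>i. g i + g' i)"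
  by (simp add: hom_deg_def torus_char_add)

lemma hom_deg_power_int: "hom_deg n d B f g \<Longrightarrow> hom_deg n d B (\<lambda>v. power_int (f v) m) (\<lambda>i. m * g i)"
  by (simp add: hom_deg_def torus_char_scale power_int_mult_distrib)

lemma hom_deg_power: "hom_deg n d B f g \<Longrightarrow> hom_deg n d B (\<lambda>v. f v ^ k) (\<lambda>i. int k * g i)"
  using hom_deg_power_int[of n d B f g "int k"] by simp

lemma hom_deg_inverse: "hom_deg n d B f g \<Longrightarrow> hom_deg n d B (\<lambda>v. inverse (f v)) (\<lambda>i. - g i)"
  by (simp add: hom_deg_def torus_char_uminus)

lemma hom_deg_divide:
  "hom_deg n d B f g \<Longrightarrow> hom_deg n d B h g' \<Longrightarrow> hom_deg n d B (\<lambda>v. f v / h v) (\<lambda>i. g i + - g' i)"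
  using hom_deg_mult[OF _ hom_deg_inverse] by (simp add: divide_inverse)

lemma hom_deg_const: "hom_deg n d B (\<lambda>v. c) (\<lambda>_. 0)"
  by (simp add: hom_deg_def torus_char_zero)

lemma hom_deg_prod:
  assumes "finite J" "\<And>j. j \<in> J \<Longrightarrow> hom_deg n d B (F j) (G j)"
  shows "hom_deg n d B (\<lambda>v. \<Prod>j\<in>J. F j v) (\<lambda>i. \<Sum>j\<in>J. G j i)"
  using assms
proof (induction J rule: finite_induct)
  case empty
  then show ?case using hom_deg_const[of n d B 1] by simp
next
  case (insert x J)
  have "hom_deg n d B (\<lambda>v. F x v * (\<Prod>j\<in>J. F j v)) (\<lambda>i. G x i + (\<Sum>j\<in>J. G j i))"
    by (rule hom_deg_mult) (use insert in auto)
  then show ?case using insert.hyps by simp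
qed

lemma hom_deg_sum:
  assumes "\<And>j. j \<in> J \<Longrightarrow> hom_deg n d B (F j) g"
  shows "hom_deg n d B (\<lambda>v. \<Sum>j\<in>J. F j v) g"
  using assms by (simp add: hom_deg_def sum_distrib_left)

lemma hom_deg_cong: "hom_deg n d B f g \<Longrightarrow> (\<And>i. i < n \<Longrightarrow> g i = h i) \<Longrightarrow> hom_deg n d B f h"
  unfolding hom_deg_def using torus_char_cong[of n g h] by simp

lemma hom_deg_fun_cong:
  "hom_deg n d B f g \<Longrightarrow> (\<And>v. positive_pt n d v \<Longrightarrow> f v = f' v) \<Longrightarrow> hom_deg n d B f' g"
  unfolding hom_deg_def using positive_torus_act by metis

lemma hom_deg_x: "j < n \<Longrightarrow> hom_deg n d B (\<lambda>v. fst v j) (\<lambda>i. if i = j then 1 else 0)"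
  by (simp add: hom_deg_def torus_act_def torus_char_unit)

lemma hom_deg_y: "hom_deg n d B (\<lambda>v. fst (snd v) j) (\<lambda>i. - B i j)"
  by (simp add: hom_deg_def torus_act_def)

lemma hom_deg_z: "hom_deg n d B (\<lambda>v. snd (snd v) q) (\<lambda>_. 0)"
  by (simp add: hom_deg_def torus_act_def torus_char_zero)

lemma hom_deg_zval: "hom_deg n d B (\<lambda>v. zval d v k s) (\<lambda>_. 0)"
  by (simp add: hom_deg_def torus_act_def torus_char_zero zval_def)

lemma zset_finite: "finite (zset n d)"
proof -
  have "zset n d \<subseteq> {..<n} \<times> {..(\<Sum>i<n. d i)}"
  proof
    fix x assume "x \<in> zset n d"
    then obtain i s where x: "x = (i, s)" "i < n" "2 * s \<le> d i" by (auto simp: zset_def)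
    have "d i \<le> (\<Sum>i<n. d i)" by (rule member_le_sum) (use x in auto)
    then show "x \<in> {..<n} \<times> {..(\<Sum>i<n. d i)}" using x by auto
  qed
  then show ?thesis by (rule finite_subset) auto
qed

lemma hom_deg_mon_eval: "hom_deg n d B (mon_eval n d m) (mon_deg n B m)"
proof -
  have "hom_deg n d B (mon_eval n d m)
     (\<lambda>i. ((\<Sum>j<n. fst m j * (if i = j then 1 else 0)) + (\<Sum>j<n. int (fst (snd m) j) * - B i j))
          + (\<Sum>q\<in>zset n d. int (snd (snd m) q) * 0))"
    unfolding mon_eval_def
    by (intro hom_deg_mult hom_deg_prod hom_deg_power_int hom_deg_power hom_deg_x hom_deg_y hom_deg_z)
       (auto simp: zset_finite)
  then show ?thesis
  proof (rule hom_deg_cong)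
    fix i assume "i < n"
    then have "(\<Sum>j<n. fst m j * (if i = j then 1 else 0)) = fst m i"
      by (simp add: if_distrib cong: if_cong)
    then show "((\<Sum>j<n. fst m j * (if i = j then 1 else 0)) + (\<Sum>j<n. int (fst (snd m) j) * - B i j))
          + (\<Sum>q\<in>zset n d. int (snd (snd m) q) * 0) = mon_deg n B m i"
      by (simp add: mon_deg_def sum_negf mult.commute)
  qed
qed

section \<open>Linear independence of Laurent monomials\<close>

(* One variable: if sum_a b_a exp (f_a r) vanishes identically, then the coefficients of each
   exponent k add up to zero (shift to a polynomial in exp r, which has infinitely many roots). *)
lemma exp_sum_class_zero_1:
  fixes b :: "'a \<Rightarrow> real" and f :: "'a \<Rightarrow> int"
  assumes fin: "finite A" and vanish: "\<And>r. (\<Sum>a\<in>A. b a * exp (of_int (f a) * r)) = 0"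
  shows "(\<Sum>a\<in>{a\<in>A. f a = k}. b a) = 0"
proof (cases "\<exists>a\<in>A. f a = k")
  case False
  then have "{a\<in>A. f a = k} = {}" by auto
  then show ?thesis by (simp only: sum.empty)
next
  case True
  define N where "N = (\<Sum>a\<in>A. nat \<bar>f a\<bar>)"
  have shift_nonneg: "f a + int N \<ge> 0" if "a \<in> A" for a
  proof -
    have "nat \<bar>f a\<bar> \<le> N" unfolding N_def by (rule member_le_sum[OF that]) (use fin in auto)
    then show ?thesis by linarith
  qed
  define p where "p = (\<Sum>a\<in>A. monom (b a) (nat (f a + int N)))"
  have roots: "poly p (exp r) = 0" for r
  proof -
    have "poly p (exp r) = (\<Sum>a\<in>A. b a * exp r ^ nat (f a + int N))"
      unfolding p_def by (simp add: poly_sum poly_monom)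
    also have "\<dots> = (\<Sum>a\<in>A. exp (of_int N * r) * (b a * exp (of_int (f a) * r)))"
    proof (rule sum.cong)
      fix a assume a: "a \<in> A"
      have "exp r ^ nat (f a + int N) = exp (of_int N * r + of_int (f a) * r)"
        using shift_nonneg[OF a] by (simp add: exp_of_nat_mult[symmetric] algebra_simps)
      then show "b a * exp r ^ nat (f a + int N) = exp (of_int N * r) * (b a * exp (of_int (f a) * r))"
        by (simp add: exp_add)
    qed simp
    also have "\<dots> = 0" using vanish by (simp add: sum_distrib_left[symmetric])
    finally show ?thesis .
  qed
  have "p = 0"
  proof (rule ccontr)
    assume "p \<noteq> 0"
    then have "finite {x. poly p x = 0}" by (rule poly_roots_finite)
    moreover have "range exp \<subseteq> {x. poly p x = 0}" using roots by auto
    ultimately have "finite (range (exp :: real \<Rightarrow> real))" by (rule finite_subset[rotated])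
    then have "finite (UNIV :: real set)" using finite_imageD inj_on_def exp_inj_iff by blast
    then show False using infinite_UNIV_char_0 by blast
  qed
  from True obtain a0 where a0: "a0 \<in> A" "f a0 = k" by auto
  have "coeff p (nat (k + int N)) = (\<Sum>a\<in>A. if nat (f a + int N) = nat (k + int N) then b a else 0)"
    unfolding p_def by (simp add: coeff_sum coeff_monom)
  also have "\<dots> = (\<Sum>a\<in>A. if f a = k then b a else 0)"
    by (rule sum.cong) (use shift_nonneg a0 in \<open>auto simp: eq_nat_nat_iff\<close>)
  also have "\<dots> = (\<Sum>a\<in>{a\<in>A. f a = k}. b a)"
    using fin by (simp add: sum.inter_filter)
  finally show ?thesis using \<open>p = 0\<close> by simp
qed

lemma exp_sum_class_zero:
  fixes c :: "'a \<Rightarrow> real" and E :: "'a \<Rightarrow> 'v \<Rightarrow> int"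
  assumes "finite V" "finite A" "\<And>a x. a \<in> A \<Longrightarrow> x \<notin> V \<Longrightarrow> E a x = 0"
    "\<And>s. (\<Sum>a\<in>A. c a * exp (\<Sum>x\<in>V. of_int (E a x) * s x)) = 0"
  shows "(\<Sum>a\<in>{a\<in>A. E a = e}. c a) = 0"
  using assms
proof (induction V arbitrary: A E c e rule: finite_induct)
  case empty
  have "E a = (\<lambda>_. 0)" if "a \<in> A" for a using empty.prems(2) that by auto
  then have "{a\<in>A. E a = e} = (if e = (\<lambda>_. 0) then A else {})" by auto
  moreover have "(\<Sum>a\<in>A. c a) = 0" using empty.prems(3) by simp
  ultimately show ?case by simp
next
  case (insert w V)
  define A' where "A' = {a\<in>A. E a w = e w}"
  define E' where "E' = (\<lambda>a. (E a)(w := 0))"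
  have V_sum: "(\<Sum>x\<in>V. of_int (E' a x) * s x) = (\<Sum>x\<in>V. of_int (E a x) * s x)" for a s
    by (rule sum.cong) (use insert.hyps(2) in \<open>auto simp: E'_def\<close>)
  have vanish': "(\<Sum>a\<in>A'. c a * exp (\<Sum>x\<in>V. of_int (E' a x) * s x)) = 0" for s
  proof -
    have "(\<Sum>a\<in>A. (c a * exp (\<Sum>x\<in>V. of_int (E a x) * s x)) * exp (of_int (E a w) * r)) = 0" for r
    proof -
      have "(\<Sum>x\<in>insert w V. of_int (E a x) * (s(w:=r)) x)
          = of_int (E a w) * r + (\<Sum>x\<in>V. of_int (E a x) * s x)" for a
      proof -
        have "(\<Sum>x\<in>V. of_int (E a x) * (s(w:=r)) x) = (\<Sum>x\<in>V. of_int (E a x) * s x)"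
          by (rule sum.cong) (use insert.hyps(2) in auto)
        then show ?thesis using insert.hyps by simp
      qed
      then show ?thesis using insert.prems(3)[of "s(w:=r)"] by (simp add: exp_add algebra_simps)
    qed
    from exp_sum_class_zero_1[OF insert.prems(1) this, of "e w"]
    show ?thesis unfolding A'_def V_sum by simp
  qed
  have "E a = e \<longleftrightarrow> E a w = e w \<and> E' a = e(w:=0)" for a
    by (auto simp: fun_eq_iff E'_def)
  then have "{a\<in>A. E a = e} = {a\<in>A'. E' a = e(w:=0)}" unfolding A'_def by auto
  moreover have "(\<Sum>a\<in>{a\<in>A'. E' a = e(w:=0)}. c a) = 0"
  proof (rule insert.IH)
    show "finite A'" using insert.prems(1) unfolding A'_def by simp
    show "E' a x = 0" if "a \<in> A'" "x \<notin> V" for a x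
      using insert.prems(2) that unfolding A'_def E'_def by auto
  qed (rule vanish')
  ultimately show ?case by simp
qed

(* A Laurent monomial, evaluated at the point with coordinates exp s, is the exponential of a
   linear form in s whose coefficient vector mon_exps m encodes m. *)
definition mon_vars :: "nat \<Rightarrow> (nat \<Rightarrow> nat) \<Rightarrow> ((nat + nat) + (nat \<times> nat)) set" where
  "mon_vars n d = Inl ` Inl ` {..<n} \<union> Inl ` Inr ` {..<n} \<union> Inr ` zset n d"

definition mon_exps :: "mon \<Rightarrow> (nat + nat) + (nat \<times> nat) \<Rightarrow> int" where
  "mon_exps m x = (case x of Inl (Inl j) \<Rightarrow> fst m j | Inl (Inr j) \<Rightarrow> int (fst (snd m) j)
                   | Inr q \<Rightarrow> int (snd (snd m) q))"

definition exp_pt :: "((nat + nat) + (nat \<times> nat) \<Rightarrow> real) \<Rightarrow> pt" where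
  "exp_pt s = ((\<lambda>j. exp (s (Inl (Inl j)))), (\<lambda>j. exp (s (Inl (Inr j)))), (\<lambda>q. exp (s (Inr q))))"

lemma sum_mon_vars:
  fixes F :: "(nat + nat) + (nat \<times> nat) \<Rightarrow> real"
  shows "(\<Sum>x\<in>mon_vars n d. F x)
    = (\<Sum>j<n. F (Inl (Inl j))) + (\<Sum>j<n. F (Inl (Inr j))) + (\<Sum>q\<in>zset n d. F (Inr q))"
  unfolding mon_vars_def
  by (subst sum.union_disjoint; (subst sum.union_disjoint)?)
     (auto simp: zset_finite sum.reindex)

lemma mon_eval_exp_pt:
  "mon_eval n d m (exp_pt s) = exp (\<Sum>x\<in>mon_vars n d. of_int (mon_exps m x) * s x)"
  by (simp add: mon_eval_def exp_pt_def sum_mon_vars mon_exps_def exp_add exp_sum zset_finite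
      exp_power_int exp_of_nat_mult[symmetric] mult.commute)

lemma positive_exp_pt: "positive_pt n d (exp_pt s)"
  by (simp add: positive_pt_def exp_pt_def)

lemma mon_exps_inj: "inj mon_exps"
proof (rule injI)
  fix m m' :: mon assume "mon_exps m = mon_exps m'"
  then have "mon_exps m (Inl (Inl j)) = mon_exps m' (Inl (Inl j))"
    "mon_exps m (Inl (Inr j)) = mon_exps m' (Inl (Inr j))"
    "mon_exps m (Inr q) = mon_exps m' (Inr q)" for j q by simp_all
  then show "m = m'" by (simp add: mon_exps_def prod_eq_iff fun_eq_iff)
qed

lemma mon_exps_support: "admissible_mon n d m \<Longrightarrow> x \<notin> mon_vars n d \<Longrightarrow> mon_exps m x = 0"
  by (auto simp: admissible_mon_def mon_vars_def mon_exps_def inj_image_mem_iff not_less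
      split: sum.split)

lemma monomials_independent:
  fixes c :: "mon \<Rightarrow> real"
  assumes "finite S" "\<And>m. m \<in> S \<Longrightarrow> admissible_mon n d m"
    and "\<And>v. positive_pt n d v \<Longrightarrow> (\<Sum>m\<in>S. c m * mon_eval n d m v) = 0"
    and "m0 \<in> S"
  shows "c m0 = 0"
proof -
  have "(\<Sum>m\<in>{m\<in>S. mon_exps m = mon_exps m0}. c m) = 0"
  proof (rule exp_sum_class_zero)
    show "finite (mon_vars n d)" by (simp add: mon_vars_def zset_finite)
    show "mon_exps m x = 0" if "m \<in> S" "x \<notin> mon_vars n d" for m x
      using mon_exps_support assms(2) that by blast
    show "(\<Sum>m\<in>S. c m * exp (\<Sum>x\<in>mon_vars n d. of_int (mon_exps m x) * s x)) = 0" for s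
      using assms(3)[OF positive_exp_pt] by (simp add: mon_eval_exp_pt)
  qed (rule assms(1))
  moreover have "{m\<in>S. mon_exps m = mon_exps m0} = {m0}"
    using assms(4) mon_exps_inj by (auto dest: injD)
  ultimately show ?thesis by simp
qed

(* If the evaluation of P is homogeneous of degree G for the torus action, then every monomial of
   P has the same torus character as G: compare coefficients in P(l . v) = l^G P(v). *)
lemma torus_char_of_support:
  assumes lp: "laurent_poly n d P"
    and eval: "\<And>v. positive_pt n d v \<Longrightarrow> lp_eval n d P v = F v"
    and hom: "hom_deg n d B F G" and l: "torus_pos n l" and Pm0: "P m0 \<noteq> 0"
  shows "torus_char n l (mon_deg n B m0) = torus_char n l G"
proof -
  define S where "S = {m. P m \<noteq> 0}"
  define c where "c m = of_int (P m) * (torus_char n l (mon_deg n B m) - torus_char n l G)" for m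
  have "c m0 = 0"
  proof (rule monomials_independent)
    show "finite S" "m0 \<in> S" using lp Pm0 by (simp_all add: S_def laurent_poly_def)
    show "admissible_mon n d m" if "m \<in> S" for m
      using lp that unfolding S_def laurent_poly_def by blast
    fix v assume pv: "positive_pt n d v"
    have act_mon: "mon_eval n d m (torus_act n B l v) = torus_char n l (mon_deg n B m) * mon_eval n d m v"
      for m using hom_deg_mon_eval l pv unfolding hom_deg_def by blast
    have "(\<Sum>m\<in>S. c m * mon_eval n d m v)
        = lp_eval n d P (torus_act n B l v) - torus_char n l G * lp_eval n d P v"
      by (simp add: act_mon c_def S_def lp_eval_def algebra_simps sum_subtractf sum_distrib_left)
    also have "\<dots> = F (torus_act n B l v) - torus_char n l G * F v"
      using eval pv positive_torus_act[OF l pv] by simp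
    also have "\<dots> = 0" using hom l pv unfolding hom_deg_def by (simp del: split_paired_All)
    finally show "(\<Sum>m\<in>S. c m * mon_eval n d m v) = 0" .
  qed
  then show ?thesis using Pm0 by (simp add: c_def)
qed

lemma torus_char_exp_unit:
  assumes "j < n"
  shows "torus_char n (\<lambda>i. if i = j then exp 1 else 1) h = exp (of_int (h j))"
proof -
  have "(\<Sum>i<n. of_int (h i) * ln (if i = j then exp 1 else 1 :: real))
      = (\<Sum>i<n. if i = j then of_int (h i) else 0)"
    by (rule sum.cong) simp_all
  then show ?thesis using assms by (simp add: torus_char_def)
qed

lemma homogeneous_if_hom_deg:
  assumes lp: "laurent_poly n d P"
    and eval: "\<And>v. positive_pt n d v \<Longrightarrow> lp_eval n d P v = F v"
    and hom: "hom_deg n d B F G"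
  shows "homogeneous n B P"
  unfolding homogeneous_def
proof (intro exI[of _ G] allI impI)
  fix m i assume Pm: "P m \<noteq> 0" and i: "i < n"
  have l: "torus_pos n (\<lambda>k. if k = i then exp 1 else 1)" by (simp add: torus_pos_def)
  have "torus_char n (\<lambda>k. if k = i then exp 1 else 1) (mon_deg n B m)
      = torus_char n (\<lambda>k. if k = i then exp 1 else 1) G"
    using lp eval hom l Pm by (rule torus_char_of_support)
  then show "mon_deg n B m i = G i" by (simp add: torus_char_exp_unit[OF i])
qed

section \<open>Degrees along a mutation\<close>

definition trop_deg :: "nat \<Rightarrow> (nat \<Rightarrow> nat \<Rightarrow> int) \<Rightarrow> trop \<Rightarrow> nat \<Rightarrow> int" where
  "trop_deg n B0 a = (\<lambda>i. - (\<Sum>j<n. B0 i j * fst a j))"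

lemma trop_deg_tmul: "trop_deg n B0 (tmul a b) i = trop_deg n B0 a i + trop_deg n B0 b i"
  by (simp add: trop_deg_def tmul_def algebra_simps sum.distrib)

lemma trop_deg_tpow: "trop_deg n B0 (tpow a m) i = m * trop_deg n B0 a i"
  by (simp add: trop_deg_def tpow_def sum_distrib_left algebra_simps)

lemma trop_deg_tinv: "trop_deg n B0 (tinv a) i = - trop_deg n B0 a i"
  by (simp add: tinv_def trop_deg_tpow)

lemma hom_deg_teval: "hom_deg n d B0 (\<lambda>v. teval n d v a) (trop_deg n B0 a)"
proof -
  have "hom_deg n d B0 (\<lambda>v. teval n d v a)
      (\<lambda>i. (\<Sum>j<n. fst a j * - B0 i j) + (\<Sum>q\<in>zset n d. snd a q * 0))"
    unfolding teval_def
    by (intro hom_deg_mult hom_deg_prod hom_deg_power_int hom_deg_y hom_deg_z) (auto simp: zset_finite)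
  then show ?thesis
    by (rule hom_deg_cong) (simp add: trop_deg_def sum_negf mult.commute)
qed

definition yhat :: "nat \<Rightarrow> (nat \<Rightarrow> nat) \<Rightarrow> (nat \<Rightarrow> nat \<Rightarrow> int) \<Rightarrow> (nat \<Rightarrow> trop)
    \<Rightarrow> (nat \<Rightarrow> pt \<Rightarrow> real) \<Rightarrow> nat \<Rightarrow> pt \<Rightarrow> real" where
  "yhat n d B Y X k v = teval n d v (Y k) * (\<Prod>j<n. power_int (X j v) (B j k))"

definition yhat_deg :: "nat \<Rightarrow> (nat \<Rightarrow> nat \<Rightarrow> int) \<Rightarrow> (nat \<Rightarrow> nat \<Rightarrow> int) \<Rightarrow> (nat \<Rightarrow> trop)
    \<Rightarrow> (nat \<Rightarrow> nat \<Rightarrow> int) \<Rightarrow> nat \<Rightarrow> nat \<Rightarrow> int" where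
  "yhat_deg n B0 B Y G k = (\<lambda>i. trop_deg n B0 (Y k) i + (\<Sum>j<n. B j k * G j i))"

lemma hom_deg_yhat:
  assumes "\<And>j. j < n \<Longrightarrow> hom_deg n d B0 (X j) (G j)"
  shows "hom_deg n d B0 (yhat n d B Y X k) (yhat_deg n B0 B Y G k)"
  unfolding yhat_def yhat_deg_def
  by (intro hom_deg_mult hom_deg_teval hom_deg_prod hom_deg_power_int assms) auto

definition exch_poly :: "nat \<Rightarrow> (nat \<Rightarrow> nat) \<Rightarrow> (nat \<Rightarrow> nat \<Rightarrow> int) \<Rightarrow> (nat \<Rightarrow> trop)
    \<Rightarrow> (nat \<Rightarrow> pt \<Rightarrow> real) \<Rightarrow> nat \<Rightarrow> pt \<Rightarrow> real" where
  "exch_poly n d B Y X k v = (\<Sum>s = 0..d k. zval d v k s * yhat n d B Y X k v ^ s)"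

lemma hom_deg_exch_poly:
  assumes "hom_deg n d B0 (yhat n d B Y X k) (\<lambda>_. 0)"
  shows "hom_deg n d B0 (exch_poly n d B Y X k) (\<lambda>_. 0)"
  unfolding exch_poly_def
  by (intro hom_deg_sum hom_deg_cong[OF hom_deg_mult[OF hom_deg_zval hom_deg_power[OF assms]]]) simp

lemma mutX_other: "i \<noteq> k \<Longrightarrow> mutX n d k B Y X i = X i"
  by (simp add: mutX_def fun_eq_iff)

lemma mutX_same: "mutX n d k B Y X k v =
    inverse (X k v) * (\<Prod>j<n. power_int (X j v) (pos (- B j k))) ^ d k
    * exch_poly n d B Y X k v / teval n d v (tden d k Y)"
  by (simp add: mutX_def exch_poly_def yhat_def Let_def)

(* The degrees of the cluster variables after mutation in direction k (tropical g-vector mutation). *)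
definition mut_deg :: "nat \<Rightarrow> (nat \<Rightarrow> nat) \<Rightarrow> (nat \<Rightarrow> nat \<Rightarrow> int) \<Rightarrow> nat \<Rightarrow> (nat \<Rightarrow> nat \<Rightarrow> int)
    \<Rightarrow> (nat \<Rightarrow> trop) \<Rightarrow> (nat \<Rightarrow> nat \<Rightarrow> int) \<Rightarrow> nat \<Rightarrow> nat \<Rightarrow> int" where
  "mut_deg n d B0 k B Y G = G(k := (\<lambda>i. - G k i + int (d k) * (\<Sum>j<n. pos (- B j k) * G j i)
      - trop_deg n B0 (tden d k Y) i))"

lemma hom_deg_mutX:
  assumes X: "\<And>j. j < n \<Longrightarrow> hom_deg n d B0 (X j) (G j)"
    and yhat: "hom_deg n d B0 (yhat n d B Y X k) (\<lambda>_. 0)"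
    and "k < n" "j < n"
  shows "hom_deg n d B0 (mutX n d k B Y X j) (mut_deg n d B0 k B Y G j)"
proof (cases "j = k")
  case True
  have "hom_deg n d B0 (\<lambda>v. inverse (X k v) * (\<Prod>j<n. power_int (X j v) (pos (- B j k))) ^ d k
      * exch_poly n d B Y X k v / teval n d v (tden d k Y))
    (\<lambda>i. ((- G k i + int (d k) * (\<Sum>j<n. pos (- B j k) * G j i)) + 0) + - trop_deg n B0 (tden d k Y) i)"
    by (intro hom_deg_divide hom_deg_mult hom_deg_inverse hom_deg_power hom_deg_prod hom_deg_power_int
        hom_deg_exch_poly hom_deg_teval X yhat) (use \<open>k < n\<close> in auto)
  then have "hom_deg n d B0 (mutX n d k B Y X k)
    (\<lambda>i. ((- G k i + int (d k) * (\<Sum>j<n. pos (- B j k) * G j i)) + 0) + - trop_deg n B0 (tden d k Y) i)"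
    by (rule hom_deg_fun_cong) (simp add: mutX_same)
  then show ?thesis unfolding True by (rule hom_deg_cong) (simp add: mut_deg_def)
next
  case False
  then show ?thesis using X \<open>j < n\<close> by (simp add: mutX_other mut_deg_def)
qed

(* Writing b = b_kj and p = [b]_+, the new degree of yhat_j equals
   deg yhat_j + d_k p deg yhat_k; only b_kk = 0 is needed. *)
lemma yhat_deg_mut:
  assumes k: "k < n" and Bkk: "B k k = 0" and j: "j < n"
    and zero: "\<And>j. j < n \<Longrightarrow> yhat_deg n B0 B Y G j c = 0"
  shows "yhat_deg n B0 (mutB d k B) (mutY d k B Y) (mut_deg n d B0 k B Y G) j c = 0"
proof -
  define G' where "G' = mut_deg n d B0 k B Y G"
  define T where "T = trop_deg n B0 (tden d k Y) c"
  define R where "R = {..<n} - {k}"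
  have split: "(\<Sum>l<n. f l) = f k + (\<Sum>l\<in>R. f l)" for f :: "nat \<Rightarrow> int"
    unfolding R_def using k by (simp add: sum.remove)
  have G'_k: "G' k c = - G k c + int (d k) * (\<Sum>l\<in>R. pos (- B l k) * G l c) - T"
    unfolding G'_def mut_deg_def T_def by (simp add: split Bkk pos_def)
  have G'_other: "l \<in> R \<Longrightarrow> G' l = G l" for l by (simp add: G'_def mut_deg_def R_def)
  have yk: "trop_deg n B0 (Y k) c + (\<Sum>l\<in>R. B l k * G l c) = 0"
    using zero[OF k] by (simp add: yhat_deg_def split Bkk)
  show ?thesis
  proof (cases "j = k")
    case True
    have "(\<Sum>l<n. mutB d k B l k * G' l c) = - (\<Sum>l\<in>R. B l k * G l c)"
      by (simp add: split Bkk mutB_def G'_other sum_negf)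
    then show ?thesis using True yk
      by (simp add: yhat_deg_def mutY_def trop_deg_tinv G'_def)
  next
    case False
    define b where "b = B k j"
    define p where "p = pos (B k j)"
    have yj: "trop_deg n B0 (Y j) c + b * G k c + (\<Sum>l\<in>R. B l j * G l c) = 0"
      using zero[OF j] by (simp add: yhat_deg_def split b_def)
    have Y': "trop_deg n B0 (mutY d k B Y j) c
        = trop_deg n B0 (Y j) c + int (d k) * p * trop_deg n B0 (Y k) c - b * T"
      using False by (simp add: mutY_def trop_deg_tmul trop_deg_tpow T_def b_def p_def)
    have "(\<Sum>l\<in>R. mutB d k B l j * G' l c)
        = (\<Sum>l\<in>R. B l j * G l c) + int (d k) * b * (\<Sum>l\<in>R. pos (- B l k) * G l c)
          + int (d k) * p * (\<Sum>l\<in>R. B l k * G l c)"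
      using False
      by (simp add: mutB_def G'_other R_def b_def p_def algebra_simps sum.distrib sum_distrib_left)
    then have "(\<Sum>l<n. mutB d k B l j * G' l c)
        = - b * G' k c + (\<Sum>l\<in>R. B l j * G l c) + int (d k) * b * (\<Sum>l\<in>R. pos (- B l k) * G l c)
          + int (d k) * p * (\<Sum>l\<in>R. B l k * G l c)"
      using False by (simp add: split mutB_def b_def)
    then have "yhat_deg n B0 (mutB d k B) (mutY d k B Y) G' j c
        = (trop_deg n B0 (Y j) c + b * G k c + (\<Sum>l\<in>R. B l j * G l c))
          + int (d k) * p * (trop_deg n B0 (Y k) c + (\<Sum>l\<in>R. B l k * G l c))"
      unfolding yhat_deg_def Y' G'_k by (simp add: algebra_simps)
    then show ?thesis using yj yk by (simp add: G'_def)
  qed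
qed

section \<open>Skew-symmetrizability is preserved by mutation\<close>

(* [a]_+ = (a + |a|) / 2, so the correction term of matrix mutation is a symmetric expression in |.|. *)
lemma double_pos: "2 * pos a = a + \<bar>a\<bar>"
  by (simp add: pos_def max_def)

lemma pos_combination: "2 * (pos (- a) * c + a * pos c) = \<bar>a\<bar> * c + a * \<bar>c\<bar>"
proof -
  have "2 * (pos (- a) * c + a * pos c) = (2 * pos (- a)) * c + a * (2 * pos c)"
    by (simp add: algebra_simps)
  also have "\<dots> = \<bar>a\<bar> * c + a * \<bar>c\<bar>"
    unfolding double_pos by (simp add: algebra_simps)
  finally show ?thesis .
qed

lemma skew_exchange_term:
  fixes Di Dj Dk a b c e :: int
  assumes pos_D: "Di > 0" "Dj > 0" "Dk > 0"
    and ab: "Di * a = - (Dk * b)" and ce: "Dk * c = - (Dj * e)"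
  shows "Di * (pos (- a) * c + a * pos c) = - (Dj * (pos (- e) * b + e * pos b))"
proof -
  have abs_ab: "Di * \<bar>a\<bar> = Dk * \<bar>b\<bar>"
    using arg_cong[OF ab, of abs] pos_D by (simp add: abs_mult)
  have abs_ce: "Dk * \<bar>c\<bar> = Dj * \<bar>e\<bar>"
    using arg_cong[OF ce, of abs] pos_D by (simp add: abs_mult)
  have "Dk * (Di * (\<bar>a\<bar> * c + a * \<bar>c\<bar>)) = (Di * \<bar>a\<bar>) * (Dk * c) + (Di * a) * (Dk * \<bar>c\<bar>)"
    by (simp add: algebra_simps)
  also have "\<dots> = Dk * (- (Dj * (\<bar>e\<bar> * b + e * \<bar>b\<bar>)))"
    unfolding abs_ab ce ab abs_ce by (simp add: algebra_simps)
  finally have abs_form: "Di * (\<bar>a\<bar> * c + a * \<bar>c\<bar>) = - (Dj * (\<bar>e\<bar> * b + e * \<bar>b\<bar>))"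
    using pos_D(3) by (simp only: mult_cancel_left) simp
  have "2 * (Di * (pos (- a) * c + a * pos c)) = Di * (2 * (pos (- a) * c + a * pos c))"
    by simp
  also have "\<dots> = - (Dj * (2 * (pos (- e) * b + e * pos b)))"
    unfolding pos_combination by (rule abs_form)
  also have "\<dots> = 2 * (- (Dj * (pos (- e) * b + e * pos b)))"
    by simp
  finally show ?thesis by simp
qed

definition skew_by :: "nat \<Rightarrow> (nat \<Rightarrow> int) \<Rightarrow> (nat \<Rightarrow> nat \<Rightarrow> int) \<Rightarrow> bool" where
  "skew_by n D B \<longleftrightarrow> (\<forall>i<n. \<forall>j<n. D i * B i j = - (D j * B j i))"

lemma skew_by_diag:
  assumes "\<And>i. i < n \<Longrightarrow> D i > 0" "skew_by n D B" "k < n"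
  shows "B k k = 0"
proof -
  have "D k * B k k = - (D k * B k k)" using assms(2,3) unfolding skew_by_def by blast
  then show ?thesis using assms(1)[OF assms(3)] by simp
qed

lemma skew_by_mutB:
  assumes pos_D: "\<And>i. i < n \<Longrightarrow> D i > 0" and skew: "skew_by n D B" and k: "k < n"
  shows "skew_by n D (mutB d k B)"
  unfolding skew_by_def
proof (intro allI impI)
  fix i j assume i: "i < n" and j: "j < n"
  have ij: "D i * B i j = - (D j * B j i)" using skew i j unfolding skew_by_def by blast
  show "D i * mutB d k B i j = - (D j * mutB d k B j i)"
  proof (cases "i = k \<or> j = k")
    case True
    then show ?thesis using ij by (auto simp: mutB_def)
  next
    case False
    have exch: "D i * (pos (- B i k) * B k j + B i k * pos (B k j))
        = - (D j * (pos (- B j k) * B k i + B j k * pos (B k i)))"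
    proof (rule skew_exchange_term)
      show "D i > 0" "D j > 0" "D k > 0" using pos_D i j k by auto
      show "D i * B i k = - (D k * B k i)" "D k * B k j = - (D j * B j k)"
        using skew i j k unfolding skew_by_def by blast+
    qed
    have "D i * mutB d k B i j = D i * B i j + int (d k) * (D i * (pos (- B i k) * B k j + B i k * pos (B k j)))"
      using False by (simp add: mutB_def algebra_simps)
    also have "\<dots> = - (D j * B j i) + int (d k) * (- (D j * (pos (- B j k) * B k i + B j k * pos (B k i))))"
      unfolding ij exch ..
    also have "\<dots> = - (D j * mutB d k B j i)"
      using False by (simp add: mutB_def algebra_simps)
    finally show ?thesis .
  qed
qed

section \<open>The invariant along the exchange tree\<close>

definition graded_seed :: "nat \<Rightarrow> (nat \<Rightarrow> nat) \<Rightarrow> (nat \<Rightarrow> nat \<Rightarrow> int) \<Rightarrow> (nat \<Rightarrow> int) \<Rightarrow> seed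
    \<Rightarrow> (nat \<Rightarrow> nat \<Rightarrow> int) \<Rightarrow> bool" where
  "graded_seed n d B0 D S G \<longleftrightarrow> (case S of (B, Y, X) \<Rightarrow> skew_by n D B
      \<and> (\<forall>j<n. hom_deg n d B0 (X j) (G j)) \<and> (\<forall>k<n. \<forall>i<n. yhat_deg n B0 B Y G k i = 0))"

(* The initial seed is graded, with deg x_j = e_j: yhat_k = y_k prod_j x_j^(b_jk) has degree -b_k + b_k. *)
lemma graded_seed_initial:
  assumes "skew_by n D B0"
  shows "graded_seed n d B0 D (B0, ty, \<lambda>j v. fst v j) (\<lambda>j i. if i = j then 1 else 0)"
proof -
  have yhat_init: "yhat_deg n B0 B0 ty (\<lambda>j i. if i = j then 1 else 0) k i = 0" if "k < n" "i < n" for k i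
  proof -
    have "(\<Sum>j<n. B0 i j * fst (ty k) j) = (\<Sum>j<n. if j = k then B0 i j else 0)"
      by (rule sum.cong) (simp_all add: ty_def)
    moreover have "(\<Sum>j<n. B0 j k * (if i = j then 1 else 0)) = (\<Sum>j<n. if i = j then B0 j k else 0)"
      by (rule sum.cong) simp_all
    ultimately show ?thesis using that by (simp add: yhat_deg_def trop_deg_def)
  qed
  show ?thesis
    using assms by (simp add: graded_seed_def hom_deg_x yhat_init)
qed

lemma graded_seed_mut:
  assumes pos_D: "\<And>i. i < n \<Longrightarrow> D i > 0" and k: "k < n" and S: "graded_seed n d B0 D (B, Y, X) G"
  shows "graded_seed n d B0 D (mut n d (B, Y, X) k) (mut_deg n d B0 k B Y G)"
proof -
  have skew: "skew_by n D B" and X: "\<And>j. j < n \<Longrightarrow> hom_deg n d B0 (X j) (G j)"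
    and Yhat: "\<And>j i. j < n \<Longrightarrow> i < n \<Longrightarrow> yhat_deg n B0 B Y G j i = 0"
    using S by (auto simp: graded_seed_def)
  have yhat_k: "hom_deg n d B0 (yhat n d B Y X k) (\<lambda>_. 0)"
    using hom_deg_yhat[OF X] Yhat[OF k] by (rule hom_deg_cong)
  have "hom_deg n d B0 (mutX n d k B Y X j) (mut_deg n d B0 k B Y G j)" if "j < n" for j
    by (rule hom_deg_mutX[OF X yhat_k k that])
  moreover have "yhat_deg n B0 (mutB d k B) (mutY d k B Y) (mut_deg n d B0 k B Y G) j i = 0"
    if "j < n" "i < n" for j i
    using skew_by_diag[OF pos_D skew k] k that Yhat by (intro yhat_deg_mut) auto
  ultimately show ?thesis
    using skew_by_mutB[OF pos_D skew k] by (simp add: graded_seed_def mut_def)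
qed

lemma graded_seed_at:
  assumes "\<And>i. i < n \<Longrightarrow> D i > 0" "skew_by n D B0" "set ks \<subseteq> {..<n}"
  shows "\<exists>G. graded_seed n d B0 D (seed_at n d B0 ks) G"
  using assms(3)
proof (induction ks rule: rev_induct)
  case Nil
  then show ?case using graded_seed_initial[OF assms(2)] by (auto simp: seed_at_def)
next
  case (snoc k ks)
  then obtain G where G: "graded_seed n d B0 D (seed_at n d B0 ks) G" and k: "k < n" by auto
  obtain B Y X where BYX: "seed_at n d B0 ks = (B, Y, X)" by (metis prod_cases3)
  have "graded_seed n d B0 D (mut n d (B, Y, X) k) (mut_deg n d B0 k B Y G)"
    using assms(1) k G BYX by (intro graded_seed_mut) auto
  moreover have "seed_at n d B0 (ks @ [k]) = mut n d (seed_at n d B0 ks) k"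
    by (simp add: seed_at_def)
  ultimately show ?case using BYX by auto
qed

theorem mainTheorem10:
  fixes n :: nat and d :: "nat \<Rightarrow> nat" and B :: "nat \<Rightarrow> nat \<Rightarrow> int"
    and ks :: "nat list" and i :: nat and P :: "mon \<Rightarrow> int"
  assumes "skew_symmetrizable n B"
    and "\<forall>k<n. d k > 0"
    and "tree_vertex n ks"
    and "i < n"
    and "laurent_poly n d P"
    and "\<forall>v. positive_pt n d v \<longrightarrow> lp_eval n d P v = cluster_var n d B ks i v"
  shows "homogeneous n B P"
proof -
  obtain D where pos_D: "\<And>i. i < n \<Longrightarrow> D i > 0" and skew: "skew_by n D B"
    using assms(1) unfolding skew_symmetrizable_def skew_by_def by blast
  have "set ks \<subseteq> {..<n}" using assms(3) by (simp add: tree_vertex_def)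
  then obtain G where "graded_seed n d B D (seed_at n d B ks) G"
    using graded_seed_at[OF pos_D skew] by blast
  then have "hom_deg n d B (cluster_var n d B ks i) (G i)"
    using assms(4) by (auto simp: graded_seed_def cluster_var_def split: prod.splits)
  then show ?thesis
    using assms(5,6) by (intro homogeneous_if_hom_deg) auto
qed

end
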